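(* Fix an iteration $k$, a current policy $\pi_k$, and $M_k:\mathcal Q\to(0,\infty)$. Assume $1-\rho^+(q)-\rho^-(q)>0$ and $1-\hat\rho^+(q)-\hat\rho^-(q)>0$ for all $q$. Define the corrected reward with estimated rates $\hat r(q,o,\xi)=\frac{\tilde r(q,o,\xi)-\hat\rho^+(q)}{1-\hat\rho^+(q)-\hat\rho^-(q)}$, the surrogate \[ \hat L_{\pi_k}(\pi(\cdot\mid q))=\frac{\mathbb E_{o\sim\pi(\cdot\mid q)}\mathbb E_{\xi}[\hat r(q,o,\xi)]-\mathbb E_{o\sim\pi_k(\cdot\mid q)}\mathbb E_{\xi}[\hat r(q,o,\xi)]}{M_k(q)}, \] and $M_k'(q)=\frac{1-\hat\rho^+(q)-\hat\rho^-(q)}{1-\rho^+(q)-\rho^-(q)}M_k(q)$. Then for every policy $\pi$, \[ \mathbb{E}_{q\sim\rho_{\mathcal Q}}\bigl[p_{\pi}(q)-p_{\pi_k}(q)\bigr] \ge \mathbb{E}_{q\sim\rho_{\mathcal Q}}\bigl[\hat L_{\pi_k}(\pi(\cdot\mid q))\bigr] -2\sqrt{\mathbb{E}_{q\sim\rho_{\mathcal Q}}\Bigl(\tfrac{1-M'_k(q)}{M'_k(q)}\Bigr)^2}\; \sqrt{\mathbb{E}_{q\sim\rho_{\mathcal Q}}\mathrm{TV}^2\bigl(\pi(\cdot\mid q)\,\|\,\pi_k(\cdot\mid q)\bigr)}. \]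
   Context: Setting: $\mathcal Q$ is a set of prompts with a probability distribution $\rho_{\mathcal Q}$; $\mathcal O$ is a countable set of responses; $r^*:\mathcal Q\times\mathcal O\to\{0,1\}$ is the true binary reward; a policy gives a distribution $\pi(\cdot\mid q)$ on $\mathcal O$; $p_\pi(q)=\mathbb E_{o\sim\pi(\cdot\mid q)}[r^*(q,o)]$. $\mathrm{TV}(P,Q)=\sup_A|P(A)-Q(A)|$. Noise model: true flip rates $\rho^+(q),\rho^-(q)\in[0,1]$; with $\xi\sim U[0,1]$ independent of $(q,o)$, $\tilde r(q,o,\xi)=(1-r^*(q,o))\mathbf 1_{\{\xi\le\rho^+(q)\}}+r^*(q,o)\mathbf 1_{\{\xi\le 1-\rho^-(q)\}}$. $\hat\rho^+(q),\hat\rho^-(q)$ are arbitrary (estimated) values used in place of the true flip rates; $\mathbb E_\xi$ is expectation over $\xi\sim U[0,1]$. *)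

theory Defs
  imports "HOL-Probability.Probability"
begin

definition tv_dist :: "'o pmf \<Rightarrow> 'o pmf \<Rightarrow> real" where
  "tv_dist P Q = (SUP A. \<bar>measure_pmf.prob P A - measure_pmf.prob Q A\<bar>)"

definition xi_expect :: "(real \<Rightarrow> real) \<Rightarrow> real" where
  "xi_expect f = (LBINT \<xi>:{0..1}. f \<xi>)"

definition noisy_reward ::
  "('q \<Rightarrow> 'o \<Rightarrow> real) \<Rightarrow> ('q \<Rightarrow> real) \<Rightarrow> ('q \<Rightarrow> real) \<Rightarrow> 'q \<Rightarrow> 'o \<Rightarrow> real \<Rightarrow> real" where
  "noisy_reward rstar rp rm q y \<xi> =
     (1 - rstar q y) * of_bool (\<xi> \<le> rp q) + rstar q y * of_bool (\<xi> \<le> 1 - rm q)"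

definition corrected_reward ::
  "('q \<Rightarrow> 'o \<Rightarrow> real) \<Rightarrow> ('q \<Rightarrow> real) \<Rightarrow> ('q \<Rightarrow> real) \<Rightarrow> ('q \<Rightarrow> real) \<Rightarrow> ('q \<Rightarrow> real)
     \<Rightarrow> 'q \<Rightarrow> 'o \<Rightarrow> real \<Rightarrow> real" where
  "corrected_reward rstar rp rm rph rmh q y \<xi> =
     (noisy_reward rstar rp rm q y \<xi> - rph q) / (1 - rph q - rmh q)"

definition success_prob :: "('q \<Rightarrow> 'o \<Rightarrow> real) \<Rightarrow> ('q \<Rightarrow> 'o pmf) \<Rightarrow> 'q \<Rightarrow> real" where
  "success_prob rstar \<pi> q = measure_pmf.expectation (\<pi> q) (\<lambda>y. rstar q y)"

definition surrogate ::
  "('q \<Rightarrow> 'o \<Rightarrow> real) \<Rightarrow> ('q \<Rightarrow> real) \<Rightarrow> ('q \<Rightarrow> real) \<Rightarrow> ('q \<Rightarrow> real) \<Rightarrow> ('q \<Rightarrow> real)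
     \<Rightarrow> ('q \<Rightarrow> real) \<Rightarrow> ('q \<Rightarrow> 'o pmf) \<Rightarrow> ('q \<Rightarrow> 'o pmf) \<Rightarrow> 'q \<Rightarrow> real" where
  "surrogate rstar rp rm rph rmh Mk \<pi>k \<pi> q =
     (measure_pmf.expectation (\<pi> q) (\<lambda>y. xi_expect (corrected_reward rstar rp rm rph rmh q y))
      - measure_pmf.expectation (\<pi>k q) (\<lambda>y. xi_expect (corrected_reward rstar rp rm rph rmh q y)))
     / Mk q"

definition Mprime ::
  "('q \<Rightarrow> real) \<Rightarrow> ('q \<Rightarrow> real) \<Rightarrow> ('q \<Rightarrow> real) \<Rightarrow> ('q \<Rightarrow> real) \<Rightarrow> ('q \<Rightarrow> real) \<Rightarrow> 'q \<Rightarrow> real" where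
  "Mprime rp rm rph rmh Mk q = (1 - rph q - rmh q) / (1 - rp q - rm q) * Mk q"

end

theory Submission
  imports Defs
begin

text \<open>Averaging the noisy reward over \<open>\<xi>\<close> gives \<open>rp + r\<^sup>* (1 - rp - rm)\<close>, so the expected
  corrected reward is an affine function of \<open>r\<^sup>*\<close> with slope \<open>(1 - rp - rm) / (1 - rph - rmh)\<close>.
  Hence the surrogate is exactly the success gap \<open>D = p\<^sub>\<pi> - p\<^sub>\<pi>\<^sub>k\<close> divided by \<open>M'\<^sub>k\<close>, and
  \<open>D - D / M'\<^sub>k = - D (1 - M'\<^sub>k) / M'\<^sub>k\<close>. Since \<open>r\<^sup>*\<close> is an indicator, \<open>|D| \<le> TV\<close>, and
  Cauchy-Schwarz in \<open>q\<close> bounds the expected error term, even without the factor 2 and for any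
  measure \<open>\<rho>\<^sub>Q\<close>.\<close>

lemma Cauchy_Schwarz_integral_abs:
  fixes f g :: "'a \<Rightarrow> real"
  assumes f2: "integrable M (\<lambda>x. (f x)\<^sup>2)" and g2: "integrable M (\<lambda>x. (g x)\<^sup>2)"
  shows "integrable M (\<lambda>x. \<bar>f x\<bar> * \<bar>g x\<bar>)"
    and "(\<integral>x. \<bar>f x\<bar> * \<bar>g x\<bar> \<partial>M) \<le> sqrt (\<integral>x. (f x)\<^sup>2 \<partial>M) * sqrt (\<integral>x. (g x)\<^sup>2 \<partial>M)"
proof -
  define A where "A = (\<integral>x. (f x)\<^sup>2 \<partial>M)"
  define B where "B = (\<integral>x. (g x)\<^sup>2 \<partial>M)"
  have [measurable]: "(\<lambda>x. \<bar>f x\<bar>) \<in> borel_measurable M" "(\<lambda>x. \<bar>g x\<bar>) \<in> borel_measurable M"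
    using measurable_compose[OF borel_measurable_integrable[OF f2] borel_measurable_sqrt]
      measurable_compose[OF borel_measurable_integrable[OF g2] borel_measurable_sqrt]
    by simp_all
  have "(\<integral>\<^sup>+x. ennreal (\<bar>f x\<bar> * \<bar>g x\<bar>) \<partial>M)\<^sup>2
      \<le> (\<integral>\<^sup>+x. ennreal \<bar>f x\<bar> ^ 2 \<partial>M) * (\<integral>\<^sup>+x. ennreal \<bar>g x\<bar> ^ 2 \<partial>M)"
    using Cauchy_Schwarz_nn_integral[of "\<lambda>x. ennreal \<bar>f x\<bar>" M "\<lambda>x. ennreal \<bar>g x\<bar>"]
    by (simp add: ennreal_mult)
  also have "\<dots> = ennreal (A * B)"
    using f2 g2 by (simp add: A_def B_def ennreal_power nn_integral_eq_integral ennreal_mult)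
  finally have nn_CS: "(\<integral>\<^sup>+x. ennreal (\<bar>f x\<bar> * \<bar>g x\<bar>) \<partial>M)\<^sup>2 \<le> ennreal (A * B)" .
  then have "(\<integral>\<^sup>+x. ennreal (\<bar>f x\<bar> * \<bar>g x\<bar>) \<partial>M)\<^sup>2 < \<infinity>"
    by (rule le_less_trans) simp
  then show fg: "integrable M (\<lambda>x. \<bar>f x\<bar> * \<bar>g x\<bar>)"
    by (simp add: integrable_iff_bounded power_less_top_ennreal)
  have "ennreal ((\<integral>x. \<bar>f x\<bar> * \<bar>g x\<bar> \<partial>M)\<^sup>2) \<le> ennreal (A * B)"
    using nn_CS fg by (simp add: nn_integral_eq_integral ennreal_power)
  then have "(\<integral>x. \<bar>f x\<bar> * \<bar>g x\<bar> \<partial>M)\<^sup>2 \<le> A * B"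
    using f2 g2 by (simp add: A_def B_def ennreal_le_iff)
  then show "(\<integral>x. \<bar>f x\<bar> * \<bar>g x\<bar> \<partial>M) \<le> sqrt A * sqrt B"
    by (simp add: real_le_rsqrt flip: real_sqrt_mult)
qed

lemma abs_expectation_diff_le_tv_dist:
  fixes P Q :: "'o pmf" and f :: "'o \<Rightarrow> real"
  assumes "\<And>y. f y \<in> {0, 1}"
  shows "\<bar>measure_pmf.expectation P f - measure_pmf.expectation Q f\<bar> \<le> tv_dist P Q"
proof -
  define S where "S = {y. f y = 1}"
  have f_eq: "f = indicator S"
    using assms by (auto simp: S_def indicator_def fun_eq_iff)
  have "\<bar>measure_pmf.prob P A - measure_pmf.prob Q A\<bar> \<le> 1" for A
    using measure_pmf.prob_le_1[of P A] measure_pmf.prob_le_1[of Q A]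
      measure_nonneg[of "measure_pmf P" A] measure_nonneg[of "measure_pmf Q" A]
    unfolding abs_le_iff by linarith
  then have "bdd_above (range (\<lambda>A. \<bar>measure_pmf.prob P A - measure_pmf.prob Q A\<bar>))"
    by (rule bdd_aboveI2)
  then have "\<bar>measure_pmf.prob P S - measure_pmf.prob Q S\<bar> \<le> tv_dist P Q"
    unfolding tv_dist_def by (rule cSUP_upper[OF UNIV_I])
  then show ?thesis
    by (simp add: f_eq)
qed

lemma tv_dist_nonneg: "0 \<le> tv_dist P Q"
  using abs_expectation_diff_le_tv_dist[of "\<lambda>_. 0" P Q] by simp

lemma xi_expect_threshold:
  assumes "0 \<le> a" "a \<le> 1"
  shows "xi_expect (\<lambda>\<xi>. (of_bool (\<xi> \<le> a) - c) / d) = (a - c) / d"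
proof -
  have integrand_eq: "(\<lambda>\<xi>. indicator {0..1} \<xi> *\<^sub>R ((of_bool (\<xi> \<le> a) - c) / d))
      = (\<lambda>\<xi>. (indicator {0..a} \<xi> - c * indicator {0..1} \<xi>) / d)"
    using assms by (auto simp: indicator_def)
  have "integrable lborel (indicator {0..a} :: real \<Rightarrow> real)"
    by (rule integrable_real_indicator) (use assms in auto)
  moreover have "integrable lborel (\<lambda>\<xi>::real. c * indicator {0..1} \<xi> :: real)"
    by (intro integrable_mult_right integrable_real_indicator) auto
  ultimately have "(LBINT \<xi>. indicator {0..a} \<xi> - c * indicator {0..1} \<xi>) = a - c"
    using assms by simp
  then show ?thesis
    unfolding xi_expect_def set_lebesgue_integral_def integrand_eq by simp
qed

lemma xi_expect_corrected_reward:
  assumes "rstar q y \<in> {0, 1}" "rp q \<in> {0..1}" "rm q \<in> {0..1}"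
  shows "xi_expect (corrected_reward rstar rp rm rph rmh q y)
    = (rp q - rph q + rstar q y * (1 - rp q - rm q)) / (1 - rph q - rmh q)"
proof (cases "rstar q y = 0")
  case True
  then have "corrected_reward rstar rp rm rph rmh q y
      = (\<lambda>\<xi>. (of_bool (\<xi> \<le> rp q) - rph q) / (1 - rph q - rmh q))"
    by (simp add: fun_eq_iff corrected_reward_def noisy_reward_def)
  then show ?thesis
    using xi_expect_threshold[of "rp q"] assms True by simp
next
  case False
  then have "rstar q y = 1"
    using assms(1) by simp
  then have "corrected_reward rstar rp rm rph rmh q y
      = (\<lambda>\<xi>. (of_bool (\<xi> \<le> 1 - rm q) - rph q) / (1 - rph q - rmh q))"
    by (simp add: fun_eq_iff corrected_reward_def noisy_reward_def)
  then show ?thesis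
    using xi_expect_threshold[of "1 - rm q"] assms \<open>rstar q y = 1\<close> by (simp add: field_simps)
qed

lemma expectation_corrected_reward:
  fixes P :: "'o pmf"
  assumes "\<And>y. rstar q y \<in> {0, 1}" "rp q \<in> {0..1}" "rm q \<in> {0..1}"
  shows "measure_pmf.expectation P (\<lambda>y. xi_expect (corrected_reward rstar rp rm rph rmh q y))
    = (rp q - rph q + measure_pmf.expectation P (rstar q) * (1 - rp q - rm q)) / (1 - rph q - rmh q)"
proof -
  have "\<bar>rstar q y\<bar> \<le> 1" for y
    using assms(1)[of y] by auto
  then have "integrable (measure_pmf P) (rstar q)"
    by (intro measure_pmf.integrable_const_bound[where B = 1] AE_I2) auto
  then show ?thesis
    using xi_expect_corrected_reward[of rstar q _ rp rm rph rmh] assms by simp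
qed

lemma surrogate_eq_success_gap_div_Mprime:
  assumes "\<And>y. rstar q y \<in> {0, 1}" "rp q \<in> {0..1}" "rm q \<in> {0..1}"
    and "1 - rp q - rm q \<noteq> 0" "1 - rph q - rmh q \<noteq> 0" "Mk q \<noteq> 0"
  shows "surrogate rstar rp rm rph rmh Mk \<pi>k \<pi> q
    = (success_prob rstar \<pi> q - success_prob rstar \<pi>k q) / Mprime rp rm rph rmh Mk q"
proof -
  define a b where "a = success_prob rstar \<pi> q" and "b = success_prob rstar \<pi>k q"
  define c where "c = rp q - rph q"
  define d where "d = 1 - rp q - rm q"
  define d_est where "d_est = 1 - rph q - rmh q"
  have "surrogate rstar rp rm rph rmh Mk \<pi>k \<pi> q = ((c + a * d) / d_est - (c + b * d) / d_est) / Mk q"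
    using assms(1-3)
    by (simp add: surrogate_def success_prob_def expectation_corrected_reward a_def b_def c_def d_def d_est_def)
  also have "\<dots> = (a - b) / (d_est / d * Mk q)"
    using assms(4-6) unfolding d_def[symmetric] d_est_def[symmetric] by (simp add: field_simps)
  finally show ?thesis
    by (simp add: Mprime_def a_def b_def d_def d_est_def)
qed

lemma success_gap_minus_surrogate_ge:
  assumes "\<And>y. rstar q y \<in> {0, 1}" "rp q \<in> {0..1}" "rm q \<in> {0..1}"
    and "1 - rp q - rm q \<noteq> 0" "1 - rph q - rmh q \<noteq> 0" "Mk q \<noteq> 0"
  shows "success_prob rstar \<pi> q - success_prob rstar \<pi>k q - surrogate rstar rp rm rph rmh Mk \<pi>k \<pi> q
    \<ge> - (\<bar>(1 - Mprime rp rm rph rmh Mk q) / Mprime rp rm rph rmh Mk q\<bar> * tv_dist (\<pi> q) (\<pi>k q))"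
proof -
  define D where "D = success_prob rstar \<pi> q - success_prob rstar \<pi>k q"
  define M' where "M' = Mprime rp rm rph rmh Mk q"
  have "M' \<noteq> 0"
    using assms(4-6) by (simp add: M'_def Mprime_def)
  have "\<bar>D\<bar> \<le> tv_dist (\<pi> q) (\<pi>k q)"
    unfolding D_def success_prob_def by (rule abs_expectation_diff_le_tv_dist) (use assms(1) in auto)
  then have "\<bar>D\<bar> * \<bar>(1 - M') / M'\<bar> \<le> tv_dist (\<pi> q) (\<pi>k q) * \<bar>(1 - M') / M'\<bar>"
    by (rule mult_right_mono) simp
  moreover have "D - D / M' = - (D * ((1 - M') / M'))"
    using \<open>M' \<noteq> 0\<close> by (simp add: field_simps)
  moreover have "D * ((1 - M') / M') \<le> \<bar>D\<bar> * \<bar>(1 - M') / M'\<bar>"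
    by (metis abs_ge_self abs_mult)
  ultimately show ?thesis
    using surrogate_eq_success_gap_div_Mprime[of rstar q rp rm rph rmh Mk \<pi>k \<pi>, OF assms]
    by (simp add: D_def M'_def mult.commute)
qed

theorem theorem6:
  fixes \<rho>Q :: "'q measure"
    and rstar :: "'q \<Rightarrow> 'o::countable \<Rightarrow> real"
    and rp rm rph rmh Mk :: "'q \<Rightarrow> real"
    and \<pi>k \<pi> :: "'q \<Rightarrow> 'o pmf"
  assumes "prob_space \<rho>Q"
    and "\<And>q y. rstar q y \<in> {0, 1}"
    and "\<And>q. rp q \<in> {0..1}" and "\<And>q. rm q \<in> {0..1}"
    and "\<And>q. 1 - rp q - rm q > 0"
    and "\<And>q. 1 - rph q - rmh q > 0"
    and "\<And>q. Mk q > 0"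
    and "integrable \<rho>Q (\<lambda>q. success_prob rstar \<pi> q - success_prob rstar \<pi>k q)"
    and "integrable \<rho>Q (\<lambda>q. surrogate rstar rp rm rph rmh Mk \<pi>k \<pi> q)"
    and "integrable \<rho>Q (\<lambda>q. ((1 - Mprime rp rm rph rmh Mk q) / Mprime rp rm rph rmh Mk q)\<^sup>2)"
    and "integrable \<rho>Q (\<lambda>q. (tv_dist (\<pi> q) (\<pi>k q))\<^sup>2)"
  shows "(\<integral>q. success_prob rstar \<pi> q - success_prob rstar \<pi>k q \<partial>\<rho>Q)
    \<ge> (\<integral>q. surrogate rstar rp rm rph rmh Mk \<pi>k \<pi> q \<partial>\<rho>Q)
       - 2 * sqrt (\<integral>q. ((1 - Mprime rp rm rph rmh Mk q) / Mprime rp rm rph rmh Mk q)\<^sup>2 \<partial>\<rho>Q)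
           * sqrt (\<integral>q. (tv_dist (\<pi> q) (\<pi>k q))\<^sup>2 \<partial>\<rho>Q)"
proof -
  define E where "E q = \<bar>(1 - Mprime rp rm rph rmh Mk q) / Mprime rp rm rph rmh Mk q\<bar>
    * tv_dist (\<pi> q) (\<pi>k q)" for q
  define bound where "bound =
    sqrt (\<integral>q. ((1 - Mprime rp rm rph rmh Mk q) / Mprime rp rm rph rmh Mk q)\<^sup>2 \<partial>\<rho>Q)
    * sqrt (\<integral>q. (tv_dist (\<pi> q) (\<pi>k q))\<^sup>2 \<partial>\<rho>Q)"
  note CS = Cauchy_Schwarz_integral_abs[OF assms(10,11)]
  have E_integrable: "integrable \<rho>Q E"
    using CS(1) by (simp add: E_def[abs_def] abs_of_nonneg[OF tv_dist_nonneg])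
  have E_le_bound: "(\<integral>q. E q \<partial>\<rho>Q) \<le> bound"
    using CS(2) by (simp add: E_def bound_def abs_of_nonneg[OF tv_dist_nonneg])
  have "0 \<le> bound"
    unfolding bound_def by (intro mult_nonneg_nonneg real_sqrt_ge_zero integral_nonneg_AE AE_I2) simp_all
  have pointwise: "- E q \<le> success_prob rstar \<pi> q - success_prob rstar \<pi>k q
      - surrogate rstar rp rm rph rmh Mk \<pi>k \<pi> q" for q
    unfolding E_def
    by (rule success_gap_minus_surrogate_ge) (use assms(2-7) in \<open>auto simp: less_imp_neq[symmetric]\<close>)
  have "- (\<integral>q. E q \<partial>\<rho>Q) \<le> (\<integral>q. success_prob rstar \<pi> q - success_prob rstar \<pi>k q
      - surrogate rstar rp rm rph rmh Mk \<pi>k \<pi> q \<partial>\<rho>Q)"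
    unfolding integral_minus[symmetric]
    by (rule integral_mono) (use E_integrable assms(8,9) pointwise in auto)
  also have "\<dots> = (\<integral>q. success_prob rstar \<pi> q - success_prob rstar \<pi>k q \<partial>\<rho>Q)
      - (\<integral>q. surrogate rstar rp rm rph rmh Mk \<pi>k \<pi> q \<partial>\<rho>Q)"
    using assms(8,9) by (rule Bochner_Integration.integral_diff)
  finally show ?thesis
    using E_le_bound \<open>0 \<le> bound\<close> unfolding bound_def by linarith
qed
end
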